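(* Let $\bar{\boldsymbol{W}}^{\star},\bar{\boldsymbol{S}}^{\star}\in\mathbb{C}^{L\times L}$ be an optimal solution of problem (SDR2) defined in the context, and assume $\bar{\boldsymbol{g}}_0^H\bar{\boldsymbol{W}}^{\star}\bar{\boldsymbol{g}}_0>0$. Define $$\bar{\boldsymbol{W}}^{\mathrm{opt}}=\frac{\bar{\boldsymbol{W}}^{\star}\bar{\boldsymbol{g}}_0\bar{\boldsymbol{g}}_0^H\bar{\boldsymbol{W}}^{\star}}{\bar{\boldsymbol{g}}_0^H\bar{\boldsymbol{W}}^{\star}\bar{\boldsymbol{g}}_0},\qquad \bar{\boldsymbol{S}}^{\mathrm{opt}}=\bar{\boldsymbol{W}}^{\star}+\bar{\boldsymbol{S}}^{\star}-\bar{\boldsymbol{W}}^{\mathrm{opt}}.$$ Then $\mathrm{rank}(\bar{\boldsymbol{W}}^{\mathrm{opt}})=1$, the pair $(\bar{\boldsymbol{W}}^{\mathrm{opt}},\bar{\boldsymbol{S}}^{\mathrm{opt}})$ is feasible for (P2) (in particular $\bar{\boldsymbol{S}}^{\mathrm{opt}}\succeq\boldsymbol{0}$), and $R(\bar{\boldsymbol{W}}^{\mathrm{opt}},\bar{\boldsymbol{S}}^{\mathrm{opt}})=R(\bar{\boldsymbol{W}}^{\star},\bar{\boldsymbol{S}}^{\star})$. Consequently the optimal values of (SDR2) and (P2) coincide and $(\bar{\boldsymbol{W}}^{\mathrm{opt}},\bar{\boldsymbol{S}}^{\mathrm{opt}})$ is an optimal solution of (P2).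
   Context: Fix integers $N\ge L\ge1$, $K\ge1$, a matrix $\boldsymbol{U}\in\mathbb{C}^{N\times L}$ with orthonormal columns, vectors $\bar{\boldsymbol{g}}_0,\bar{\boldsymbol{g}}_1,\dots,\bar{\boldsymbol{g}}_{K+1}\in\mathbb{C}^{L}$, noise powers $\sigma_0^2,\sigma_1^2,\dots,\sigma_{K+1}^2>0$, $\sigma_s^2>0$, a complex number $\beta_s\neq0$, an integer $T\ge1$, thresholds $\Gamma_\theta,\Gamma_r>0$, $Q\ge0$, $P>0$, and $0<\zeta\le1$. Let $\mathcal{K}_{\mathrm{ER}}=\{1,\dots,K\}$ and $\mathcal{K}_{\mathrm{EAV}}=\{1,\dots,K+1\}$. Let $\boldsymbol{A},\dot{\boldsymbol{A}}_\theta,\dot{\boldsymbol{A}}_r\in\mathbb{C}^{N\times N}$ be given matrices (in the paper, $\boldsymbol{A}=\boldsymbol{a}\boldsymbol{a}^T$ for the near-field steering vector $\boldsymbol{a}$ of the target and $\dot{\boldsymbol{A}}_\theta,\dot{\boldsymbol{A}}_r$ its partial derivatives with respect to target angle and range). For Hermitian $\bar{\boldsymbol{W}},\bar{\boldsymbol{S}}\in\mathbb{C}^{L\times L}$ set $\boldsymbol{R}_x=\boldsymbol{U}(\bar{\boldsymbol{W}}+\bar{\boldsymbol{S}})\boldsymbol{U}^H$ and, for $\dot{\boldsymbol{A}}\in\{\dot{\boldsymbol{A}}_\theta,\dot{\boldsymbol{A}}_r\}$, $$\mathrm{CRB}_{\dot{\boldsymbol{A}}}(\bar{\boldsymbol{W}},\bar{\boldsymbol{S}})=\frac{\sigma_s^2}{2|\beta_s|^2T}\cdot\frac{\mathrm{tr}(\boldsymbol{A}\boldsymbol{R}_x\boldsymbol{A}^H)}{\mathrm{tr}(\dot{\boldsymbol{A}}\boldsymbol{R}_x\dot{\boldsymbol{A}}^H)\,\mathrm{tr}(\boldsymbol{A}\boldsymbol{R}_x\boldsymbol{A}^H)-|\mathrm{tr}(\boldsymbol{A}\boldsymbol{R}_x\dot{\boldsymbol{A}}^H)|^2}$$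 (the CRBs for angle and range are $\mathrm{CRB}_{\dot{\boldsymbol{A}}_\theta}$ and $\mathrm{CRB}_{\dot{\boldsymbol{A}}_r}$). Define the SINRs $\gamma_k(\bar{\boldsymbol{W}},\bar{\boldsymbol{S}})=\dfrac{\bar{\boldsymbol{g}}_k^H\bar{\boldsymbol{W}}\bar{\boldsymbol{g}}_k}{\bar{\boldsymbol{g}}_k^H\bar{\boldsymbol{S}}\bar{\boldsymbol{g}}_k+\sigma_k^2}$ for $k=0,1,\dots,K+1$, and the secrecy rate $$R(\bar{\boldsymbol{W}},\bar{\boldsymbol{S}})=\min_{k\in\mathcal{K}_{\mathrm{EAV}}}\Big(\log_2(1+\gamma_0(\bar{\boldsymbol{W}},\bar{\boldsymbol{S}}))-\log_2(1+\gamma_k(\bar{\boldsymbol{W}},\bar{\boldsymbol{S}}))\Big)^+,$$ where $(x)^+=\max(x,0)$. Problem (P2) is: maximize $R(\bar{\boldsymbol{W}},\bar{\boldsymbol{S}})$ over Hermitian $\bar{\boldsymbol{W}},\bar{\boldsymbol{S}}\in\mathbb{C}^{L\times L}$ subject to (i) $\mathrm{CRB}_{\dot{\boldsymbol{A}}_\theta}(\bar{\boldsymbol{W}},\bar{\boldsymbol{S}})\le\Gamma_\theta$ and $\mathrm{CRB}_{\dot{\boldsymbol{A}}_r}(\bar{\boldsymbol{W}},\bar{\boldsymbol{S}})\le\Gamma_r$ (with the denominators required to be positive); (ii) $\zeta\bar{\boldsymbol{g}}_k^H(\bar{\boldsymbol{W}}+\bar{\boldsymbol{S}})\bar{\boldsymbol{g}}_k\ge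 Q$ for all $k\in\mathcal{K}_{\mathrm{ER}}$; (iii) $\mathrm{Tr}(\bar{\boldsymbol{W}}+\bar{\boldsymbol{S}})\le P$; (iv) $\bar{\boldsymbol{W}}\succeq\boldsymbol{0}$, $\bar{\boldsymbol{S}}\succeq\boldsymbol{0}$; (v) $\mathrm{rank}(\bar{\boldsymbol{W}})\le1$. Problem (SDR2) is the same problem with constraint (v) removed. *)

theory Defs
  imports "HOL-Analysis.Analysis"
begin

text \<open>Complex matrices are rendered as complex^'c^'r (r rows, c columns);
 the dimensions N and L are the cardinalities of finite index types.\<close>

definition cadj :: "complex^'m^'n \<Rightarrow> complex^'n^'m" where
  "cadj M = (\<chi> i j. cnj (M$j$i))"

definition hermitian :: "complex^'n^'n \<Rightarrow> bool" where
  "hermitian M \<longleftrightarrow> cadj M = M"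

definition qform :: "complex^'n \<Rightarrow> complex^'n^'n \<Rightarrow> complex" where
  "qform x M = (\<Sum>i\<in>UNIV. \<Sum>j\<in>UNIV. cnj (x$i) * M$i$j * x$j)"

definition psd :: "complex^'n^'n \<Rightarrow> bool" where
  "psd M \<longleftrightarrow> hermitian M \<and> (\<forall>x. 0 \<le> Re (qform x M))"

definition outer :: "complex^'n \<Rightarrow> complex^'n \<Rightarrow> complex^'n^'n" where
  "outer v w = (\<chi> i j. v$i * cnj (w$j))"

definition crb_num :: "complex^'n^'n \<Rightarrow> complex^'n^'n \<Rightarrow> real" where
  "crb_num A Rx = Re (trace (A ** Rx ** cadj A))"

definition crb_den :: "complex^'n^'n \<Rightarrow> complex^'n^'n \<Rightarrow> complex^'n^'n \<Rightarrow> real" where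
  "crb_den A Ad Rx = Re (trace (Ad ** Rx ** cadj Ad)) * Re (trace (A ** Rx ** cadj A))
                     - (cmod (trace (A ** Rx ** cadj Ad)))\<^sup>2"

definition CRB :: "real \<Rightarrow> complex \<Rightarrow> nat \<Rightarrow> complex^'n^'n \<Rightarrow> complex^'n^'n \<Rightarrow> complex^'n^'n \<Rightarrow> real" where
  "CRB \<sigma>s\<^sub>2 \<beta> T A Ad Rx = \<sigma>s\<^sub>2 / (2 * (cmod \<beta>)\<^sup>2 * real T) * (crb_num A Rx / crb_den A Ad Rx)"

definition Rx :: "complex^'l^'n \<Rightarrow> complex^'l^'l \<Rightarrow> complex^'l^'l \<Rightarrow> complex^'n^'n" where
  "Rx U W S = U ** (W + S) ** cadj U"

definition sinr :: "complex^'l \<Rightarrow> real \<Rightarrow> complex^'l^'l \<Rightarrow> complex^'l^'l \<Rightarrow> real" where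
  "sinr g sig2 W S = Re (qform g W) / (Re (qform g S) + sig2)"

definition secrecy_rate :: "(nat \<Rightarrow> complex^'l) \<Rightarrow> (nat \<Rightarrow> real) \<Rightarrow> nat
      \<Rightarrow> complex^'l^'l \<Rightarrow> complex^'l^'l \<Rightarrow> real" where
  "secrecy_rate g sig2 K W S =
     Min ((\<lambda>k. max (log 2 (1 + sinr (g 0) (sig2 0) W S) - log 2 (1 + sinr (g k) (sig2 k) W S)) 0)
          ` {1..K+1})"

definition sdr2_feasible ::
  "complex^'l^'n \<Rightarrow> complex^'n^'n \<Rightarrow> complex^'n^'n \<Rightarrow> complex^'n^'n
   \<Rightarrow> real \<Rightarrow> complex \<Rightarrow> nat \<Rightarrow> real \<Rightarrow> real
   \<Rightarrow> (nat \<Rightarrow> complex^'l) \<Rightarrow> nat \<Rightarrow> real \<Rightarrow> real \<Rightarrow> real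
   \<Rightarrow> complex^'l^'l \<Rightarrow> complex^'l^'l \<Rightarrow> bool" where
  "sdr2_feasible U A Ath Ar \<sigma>s\<^sub>2 \<beta> T \<Gamma>th \<Gamma>r g K \<zeta> Q P W S \<longleftrightarrow>
     hermitian W \<and> hermitian S \<and>
     crb_den A Ath (Rx U W S) > 0 \<and> CRB \<sigma>s\<^sub>2 \<beta> T A Ath (Rx U W S) \<le> \<Gamma>th \<and>
     crb_den A Ar (Rx U W S) > 0 \<and> CRB \<sigma>s\<^sub>2 \<beta> T A Ar (Rx U W S) \<le> \<Gamma>r \<and>
     (\<forall>k\<in>{1..K}. \<zeta> * Re (qform (g k) (W + S)) \<ge> Q) \<and>
     Re (trace (W + S)) \<le> P \<and>
     psd W \<and> psd S"

definition p2_feasible ::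
  "complex^'l^'n \<Rightarrow> complex^'n^'n \<Rightarrow> complex^'n^'n \<Rightarrow> complex^'n^'n
   \<Rightarrow> real \<Rightarrow> complex \<Rightarrow> nat \<Rightarrow> real \<Rightarrow> real
   \<Rightarrow> (nat \<Rightarrow> complex^'l) \<Rightarrow> nat \<Rightarrow> real \<Rightarrow> real \<Rightarrow> real
   \<Rightarrow> complex^'l^'l \<Rightarrow> complex^'l^'l \<Rightarrow> bool" where
  "p2_feasible U A Ath Ar \<sigma>s\<^sub>2 \<beta> T \<Gamma>th \<Gamma>r g K \<zeta> Q P W S \<longleftrightarrow>
     sdr2_feasible U A Ath Ar \<sigma>s\<^sub>2 \<beta> T \<Gamma>th \<Gamma>r g K \<zeta> Q P W S \<and> rank W \<le> 1"

end

theory Submission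
  imports Defs
begin

text \<open>Write \<open>u = W g\<^sub>0\<close> and \<open>c = g\<^sub>0\<^sup>H W g\<^sub>0 > 0\<close>. The rank-one matrix \<open>u u\<^sup>H / c\<close> has the quadratic form
  \<open>|x\<^sup>H u|\<^sup>2 / c\<close>, which by the Cauchy-Schwarz inequality for the semidefinite form of \<open>W\<close> lies between
  \<open>0\<close> and \<open>x\<^sup>H W x\<close>, with equality at \<open>x = g\<^sub>0\<close>. Moving \<open>W - u u\<^sup>H / c\<close> from the information
  covariance into the artificial noise therefore keeps \<open>W + S\<close> (hence every constraint of (SDR2))
  and the legitimate SINR, keeps both matrices semidefinite, and can only lower the eavesdroppers'
  SINRs. So the secrecy rate does not drop, and optimality of \<open>(W, S)\<close> makes it equal.\<close>

definition cinner :: "complex^'n \<Rightarrow> complex^'n \<Rightarrow> complex" where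
  "cinner x y = (\<Sum>i\<in>UNIV. cnj (x$i) * y$i)"

lemma cinner_add_left: "cinner (x + y) z = cinner x z + cinner y z"
  by (simp add: cinner_def sum.distrib algebra_simps)

lemma cinner_add_right: "cinner x (y + z) = cinner x y + cinner x z"
  by (simp add: cinner_def sum.distrib algebra_simps)

lemma cinner_scale_left: "cinner (t *s x) y = cnj t * cinner x y"
  by (simp add: cinner_def sum_distrib_left algebra_simps)

lemma cinner_scale_right: "cinner x (t *s y) = t * cinner x y"
  by (simp add: cinner_def sum_distrib_left algebra_simps)

lemma matrix_vector_mult_scale: "M *v (t *s x) = t *s (M *v (x::complex^'n))"
  by (auto simp: vec_eq_iff matrix_vector_mult_def sum_distrib_left mult_ac intro!: sum.cong)

lemma qform_eq_cinner: "qform x M = cinner x (M *v x)"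
  by (simp add: qform_def cinner_def matrix_vector_mult_def sum_distrib_left mult.assoc)

lemma qform_add: "qform x (M + N) = qform x M + qform x N"
  by (simp add: qform_def sum.distrib algebra_simps)

lemma qform_diff: "qform x (M - N) = qform x M - qform x N"
  by (simp add: qform_def sum_subtractf algebra_simps)

lemma hermitian_iff: "hermitian M \<longleftrightarrow> (\<forall>i j. M$i$j = cnj (M$j$i))"
  unfolding hermitian_def cadj_def vec_eq_iff by (simp add: eq_commute[of "cnj _"])

lemma hermitian_add: "hermitian M \<Longrightarrow> hermitian N \<Longrightarrow> hermitian (M + N)"
  by (simp add: hermitian_def cadj_def vec_eq_iff)

lemma hermitian_diff: "hermitian M \<Longrightarrow> hermitian N \<Longrightarrow> hermitian (M - N)"
  by (simp add: hermitian_def cadj_def vec_eq_iff)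

lemma cinner_hermitian_commute:
  assumes "hermitian M"
  shows "cinner x (M *v y) = cnj (cinner y (M *v x))"
proof -
  have "cinner x (M *v y) = (\<Sum>i\<in>UNIV. \<Sum>j\<in>UNIV. cnj (x$i) * M$i$j * y$j)"
    by (simp add: cinner_def matrix_vector_mult_def sum_distrib_left mult.assoc)
  also have "\<dots> = (\<Sum>j\<in>UNIV. \<Sum>i\<in>UNIV. cnj (x$i) * M$i$j * y$j)"
    by (rule sum.swap)
  also have "\<dots> = cnj (\<Sum>j\<in>UNIV. \<Sum>i\<in>UNIV. cnj (y$j) * M$j$i * x$i)"
  proof -
    have "cnj (M$j$i) = M$i$j" for i j
      using assms by (metis hermitian_iff complex_cnj_cnj)
    then show ?thesis by (simp add: mult.commute mult.left_commute)
  qed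
  also have "\<dots> = cnj (cinner y (M *v x))"
    by (simp add: cinner_def matrix_vector_mult_def sum_distrib_left mult.assoc)
  finally show ?thesis .
qed

lemma qform_hermitian_real: "hermitian M \<Longrightarrow> qform x M = of_real (Re (qform x M))"
  using cinner_hermitian_commute[of M x x] by (simp add: qform_eq_cinner complex_eq_iff)

lemma psd_add: "psd M \<Longrightarrow> psd N \<Longrightarrow> psd (M + N)"
  by (simp add: psd_def hermitian_add qform_add add_nonneg_nonneg)

text \<open>Expand \<open>0 \<le> (x + t v)\<^sup>H W (x + t v)\<close> at the minimising \<open>t = -(v\<^sup>H W x) / (v\<^sup>H W v)\<close>.\<close>
lemma psd_cauchy_schwarz:
  assumes psd: "psd W" and pos: "Re (qform v W) > 0"
  shows "(cmod (cinner x (W *v v)))\<^sup>2 \<le> Re (qform x W) * Re (qform v W)"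
proof -
  have H: "hermitian W" using psd by (simp add: psd_def)
  define b where "b = cinner x (W *v v)"
  define r where "r = Re (qform v W)"
  define t where "t = - cnj b / of_real r"
  have bb: "cnj b * b = of_real ((cmod b)\<^sup>2)"
    by (metis complex_norm_square mult.commute)
  have "qform (x + t *s v) W = qform x W + t * b + cnj t * cnj b + cnj t * t * qform v W"
    using cinner_hermitian_commute[OF H, of v x]
    by (simp add: qform_eq_cinner matrix_vector_right_distrib matrix_vector_mult_scale
        cinner_add_left cinner_add_right cinner_scale_left cinner_scale_right b_def algebra_simps)
  also have "\<dots> = of_real (Re (qform x W) - (cmod b)\<^sup>2 / r)"
  proof -
    have "t * b = - of_real ((cmod b)\<^sup>2 / r)" and "cnj t * cnj b = - of_real ((cmod b)\<^sup>2 / r)"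
      using bb by (simp_all add: t_def mult.commute)
    moreover have "cnj t * t * qform v W = of_real ((cmod b)\<^sup>2 / r)"
    proof -
      have "cnj t * t * of_real r = b * cnj b / of_real r"
        using pos by (simp add: t_def r_def field_simps)
      then show ?thesis
        using qform_hermitian_real[OF H, of v] complex_norm_square[of b] by (simp add: r_def)
    qed
    ultimately show ?thesis
      by (subst qform_hermitian_real[OF H, of x]) simp
  qed
  finally have "0 \<le> Re (qform x W) - (cmod b)\<^sup>2 / r"
    using psd unfolding psd_def by (metis Re_complex_of_real)
  then show ?thesis
    using pos by (simp add: b_def r_def field_simps)
qed
lemma qform_outer_divide:
  "qform x (\<chi> i j. outer u u $i$j / c) = cinner x u * cnj (cinner x u) / c"
proof -
  have "qform x (\<chi> i j. outer u u $i$j / c)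
      = (\<Sum>i\<in>UNIV. \<Sum>j\<in>UNIV. (cnj (x$i) * u$i) * (x$j * cnj (u$j))) / c"
    by (simp add: qform_def outer_def sum_divide_distrib mult_ac)
  also have "\<dots> = cinner x u * cnj (cinner x u) / c"
    by (simp add: cinner_def sum_product)
  finally show ?thesis .
qed

lemma rank_outer_divide:
  fixes u w :: "complex^'n"
  assumes "u \<noteq> 0" "w \<noteq> 0" "c \<noteq> 0"
  shows "rank (\<chi> i j. outer u w $i$j / c) = 1"
proof -
  define M where "M = (\<chi> i j. outer u w $i$j / c)"
  define w' where "w' = (\<chi> j. cnj (w$j))"
  obtain i0 where i0: "u$i0 \<noteq> 0" using assms(1) by (auto simp: vec_eq_iff)
  have w'_nz: "w' \<noteq> 0" using assms(2) by (auto simp: w'_def vec_eq_iff)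
  have row_M: "row i M = (u$i / c) *s w'" for i
    by (simp add: row_def M_def outer_def w'_def vec_eq_iff)
  have "rows M \<subseteq> vec.span {w'}"
    unfolding rows_def using row_M by (auto intro: vec.span_scale vec.span_base)
  moreover have "w' \<in> vec.span (rows M)"
  proof -
    have "w' = (c / u$i0) *s row i0 M" using row_M i0 assms(3) by (simp add: vec_eq_iff)
    then show ?thesis
      by (metis (mono_tags, lifting) rows_def mem_Collect_eq UNIV_I vec.span_base vec.span_scale)
  qed
  ultimately have "vec.span (rows M) = vec.span {w'}" by (simp add: vec.span_eq)
  then show ?thesis
    unfolding M_def[symmetric] row_rank_def_gen using w'_nz by (metis vec.dim_span vec.dim_singleton)
qed

definition rank_one_part :: "complex^'n^'n \<Rightarrow> complex^'n \<Rightarrow> complex^'n^'n" where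
  "rank_one_part W v = (\<chi> i j. outer (W *v v) (W *v v) $i$j / qform v W)"

lemma qform_rank_one_part:
  assumes "hermitian W"
  shows "qform x (rank_one_part W v) = of_real ((cmod (cinner x (W *v v)))\<^sup>2 / Re (qform v W))"
  unfolding rank_one_part_def qform_outer_divide complex_norm_square[symmetric]
  by (subst qform_hermitian_real[OF assms]) simp

lemma qform_rank_one_part_self:
  assumes "hermitian W"
  shows "qform v (rank_one_part W v) = qform v W"
proof -
  obtain r where r: "qform v W = of_real r"
    using qform_hermitian_real[OF assms] by blast
  then show ?thesis
    by (simp add: qform_rank_one_part[OF assms] qform_eq_cinner[symmetric] power2_eq_square)
qed

lemma psd_rank_one_part:
  assumes "psd W"
  shows "psd (rank_one_part W v)"
proof -
  have H: "hermitian W" using assms by (simp add: psd_def)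
  have "cnj (qform v W) = qform v W"
    by (metis qform_hermitian_real[OF H] complex_cnj_complex_of_real)
  then have "hermitian (rank_one_part W v)"
    by (simp add: hermitian_iff rank_one_part_def outer_def mult.commute)
  moreover have "0 \<le> Re (qform v W)" using assms by (simp add: psd_def)
  ultimately show ?thesis
    by (simp add: psd_def qform_rank_one_part[OF H])
qed

lemma Re_qform_rank_one_part_le:
  assumes "psd W" "Re (qform v W) > 0"
  shows "Re (qform x (rank_one_part W v)) \<le> Re (qform x W)"
  using psd_cauchy_schwarz[OF assms, of x] assms(2)
  by (simp add: qform_rank_one_part assms(1)[unfolded psd_def] divide_le_eq)

lemma psd_diff_rank_one_part:
  assumes "psd W" "Re (qform v W) > 0"
  shows "psd (W - rank_one_part W v)"
  using assms Re_qform_rank_one_part_le[OF assms] psd_rank_one_part[OF assms(1)]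
  by (simp add: psd_def hermitian_diff qform_diff)

lemma rank_rank_one_part:
  assumes "hermitian W" "Re (qform v W) > 0"
  shows "rank (rank_one_part W v) = 1"
proof -
  have "qform v W \<noteq> 0" using assms(2) by auto
  then have "W *v v \<noteq> 0" by (auto simp: qform_eq_cinner cinner_def)
  then show ?thesis
    using \<open>qform v W \<noteq> 0\<close> by (simp add: rank_one_part_def rank_outer_divide)
qed

lemma sinr_nonneg:
  "0 \<le> Re (qform g W) \<Longrightarrow> 0 \<le> Re (qform g S) \<Longrightarrow> 0 < sig2 \<Longrightarrow> 0 \<le> sinr g sig2 W S"
  by (simp add: sinr_def)

lemma sinr_transfer_eq:
  "qform g W' = qform g W \<Longrightarrow> sinr g sig2 W' (W + S - W') = sinr g sig2 W S"
  by (simp add: sinr_def qform_add qform_diff)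

lemma sinr_transfer_le:
  assumes "0 \<le> Re (qform g W')" "Re (qform g W') \<le> Re (qform g W)"
    and "0 \<le> Re (qform g S)" "0 < sig2"
  shows "sinr g sig2 W' (W + S - W') \<le> sinr g sig2 W S"
proof -
  define a' a D where "a' = Re (qform g W')" "a = Re (qform g W)" "D = Re (qform g S) + sig2"
  have "sinr g sig2 W' (W + S - W') = a' / (D + a - a')"
    by (simp add: sinr_def qform_add qform_diff a'_a_D_def algebra_simps)
  also have "\<dots> \<le> a' / D"
    using assms by (intro divide_left_mono) (auto simp: a'_a_D_def)
  also have "\<dots> \<le> a / D"
    using assms by (intro divide_right_mono) (auto simp: a'_a_D_def)
  also have "\<dots> = sinr g sig2 W S"
    by (simp add: sinr_def a'_a_D_def)
  finally show ?thesis .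
qed

lemma secrecy_rate_mono:
  assumes legit: "0 \<le> sinr (g 0) (sig2 0) W S" "sinr (g 0) (sig2 0) W S \<le> sinr (g 0) (sig2 0) W' S'"
    and eaves: "\<And>k. k \<in> {1..K+1} \<Longrightarrow> 0 \<le> sinr (g k) (sig2 k) W' S'"
      "\<And>k. k \<in> {1..K+1} \<Longrightarrow> sinr (g k) (sig2 k) W' S' \<le> sinr (g k) (sig2 k) W S"
  shows "secrecy_rate g sig2 K W S \<le> secrecy_rate g sig2 K W' S'"
  unfolding secrecy_rate_def
proof (rule Min.boundedI)
  fix y
  assume "y \<in> (\<lambda>k. max (log 2 (1 + sinr (g 0) (sig2 0) W' S') - log 2 (1 + sinr (g k) (sig2 k) W' S')) 0) ` {1..K+1}"
  then obtain k where k: "k \<in> {1..K+1}"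
    and y: "y = max (log 2 (1 + sinr (g 0) (sig2 0) W' S') - log 2 (1 + sinr (g k) (sig2 k) W' S')) 0"
    by blast
  have "log 2 (1 + sinr (g 0) (sig2 0) W S) \<le> log 2 (1 + sinr (g 0) (sig2 0) W' S')"
    using legit by simp
  moreover have "log 2 (1 + sinr (g k) (sig2 k) W' S') \<le> log 2 (1 + sinr (g k) (sig2 k) W S)"
    using eaves[OF k] by simp
  ultimately have "max (log 2 (1 + sinr (g 0) (sig2 0) W S) - log 2 (1 + sinr (g k) (sig2 k) W S)) 0 \<le> y"
    unfolding y by linarith
  then show "Min ((\<lambda>k. max (log 2 (1 + sinr (g 0) (sig2 0) W S) - log 2 (1 + sinr (g k) (sig2 k) W S)) 0) ` {1..K+1}) \<le> y"
    using k by (intro Min.coboundedI[THEN order_trans]) auto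
qed auto

lemma sdr2_feasible_same_sum:
  assumes "sdr2_feasible U A Ath Ar \<sigma>s\<^sub>2 \<beta> T \<Gamma>th \<Gamma>r g K \<zeta> Q P W S"
    and "psd W'" "psd S'" "W' + S' = W + S"
  shows "sdr2_feasible U A Ath Ar \<sigma>s\<^sub>2 \<beta> T \<Gamma>th \<Gamma>r g K \<zeta> Q P W' S'"
  using assms by (simp add: sdr2_feasible_def Rx_def psd_def)

theorem proposition1:
  fixes U :: "complex^'l^'n"
    and A Ath Ar :: "complex^'n^'n"
    and g :: "nat \<Rightarrow> complex^'l"
    and sig2 :: "nat \<Rightarrow> real"
    and \<sigma>s\<^sub>2 :: real and \<beta> :: complex and T :: nat and K :: nat
    and \<Gamma>th \<Gamma>r Q P \<zeta> :: real
    and Wst Sst :: "complex^'l^'l"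
  assumes dims: "CARD('l) \<le> CARD('n)"
    and orthonormal: "cadj U ** U = mat 1"
    and K: "K \<ge> 1"
    and noise: "\<forall>k\<le>K+1. sig2 k > 0"
    and sens_noise: "\<sigma>s\<^sub>2 > 0"
    and beta: "\<beta> \<noteq> 0"
    and T: "T \<ge> 1"
    and thresholds: "\<Gamma>th > 0" "\<Gamma>r > 0" "Q \<ge> 0" "P > 0" "0 < \<zeta>" "\<zeta> \<le> 1"
    and opt_feas: "sdr2_feasible U A Ath Ar \<sigma>s\<^sub>2 \<beta> T \<Gamma>th \<Gamma>r g K \<zeta> Q P Wst Sst"
    and opt_max: "\<forall>W S. sdr2_feasible U A Ath Ar \<sigma>s\<^sub>2 \<beta> T \<Gamma>th \<Gamma>r g K \<zeta> Q P W S
                    \<longrightarrow> secrecy_rate g sig2 K W S \<le> secrecy_rate g sig2 K Wst Sst"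
    and pos: "Re (qform (g 0) Wst) > 0"
  shows "let Wopt = (\<chi> i j. (outer (Wst *v g 0) (Wst *v g 0))$i$j / qform (g 0) Wst);
             Sopt = Wst + Sst - Wopt
         in rank Wopt = 1
          \<and> p2_feasible U A Ath Ar \<sigma>s\<^sub>2 \<beta> T \<Gamma>th \<Gamma>r g K \<zeta> Q P Wopt Sopt
          \<and> psd Sopt
          \<and> secrecy_rate g sig2 K Wopt Sopt = secrecy_rate g sig2 K Wst Sst
          \<and> (\<forall>W S. sdr2_feasible U A Ath Ar \<sigma>s\<^sub>2 \<beta> T \<Gamma>th \<Gamma>r g K \<zeta> Q P W S
                    \<longrightarrow> secrecy_rate g sig2 K W S \<le> secrecy_rate g sig2 K Wopt Sopt)
          \<and> (\<forall>W S. p2_feasible U A Ath Ar \<sigma>s\<^sub>2 \<beta> T \<Gamma>th \<Gamma>r g K \<zeta> Q P W S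
                    \<longrightarrow> secrecy_rate g sig2 K W S \<le> secrecy_rate g sig2 K Wopt Sopt)"
proof -
  define Wopt where "Wopt = rank_one_part Wst (g 0)"
  define Sopt where "Sopt = Wst + Sst - Wopt"
  let ?feas = "sdr2_feasible U A Ath Ar \<sigma>s\<^sub>2 \<beta> T \<Gamma>th \<Gamma>r g K \<zeta> Q P"
  let ?rate = "secrecy_rate g sig2 K"
  have psd_opt: "psd Wst" "psd Sst" using opt_feas by (simp_all add: sdr2_feasible_def)
  then have herm_Wst: "hermitian Wst" by (simp add: psd_def)
  have rank1: "rank Wopt = 1"
    unfolding Wopt_def using rank_rank_one_part[OF herm_Wst pos] .
  have psd_Wopt: "psd Wopt" unfolding Wopt_def using psd_rank_one_part[OF psd_opt(1)] .
  have psd_Sopt: "psd Sopt"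
    using psd_add[OF psd_diff_rank_one_part[OF psd_opt(1) pos] psd_opt(2)]
    by (simp add: Sopt_def Wopt_def algebra_simps)
  have feas: "?feas Wopt Sopt"
    using sdr2_feasible_same_sum[OF opt_feas psd_Wopt psd_Sopt] by (simp add: Sopt_def)
  have "?rate Wst Sst \<le> ?rate Wopt Sopt"
  proof (rule secrecy_rate_mono)
    show "sinr (g 0) (sig2 0) Wst Sst \<le> sinr (g 0) (sig2 0) Wopt Sopt"
      using sinr_transfer_eq[OF qform_rank_one_part_self[OF herm_Wst]] by (simp add: Sopt_def Wopt_def)
    fix k assume "k \<in> {1..K+1}"
    then have "0 < sig2 k" using noise by simp
    then show "0 \<le> sinr (g k) (sig2 k) Wopt Sopt" "sinr (g k) (sig2 k) Wopt Sopt \<le> sinr (g k) (sig2 k) Wst Sst"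
      using psd_Wopt psd_Sopt psd_opt Re_qform_rank_one_part_le[OF psd_opt(1) pos]
      by (auto simp: psd_def Sopt_def Wopt_def intro!: sinr_nonneg sinr_transfer_le)
  qed (use noise psd_opt in \<open>auto simp: psd_def intro!: sinr_nonneg\<close>)
  moreover have "?rate Wopt Sopt \<le> ?rate Wst Sst" using opt_max feas by blast
  ultimately have "?rate Wopt Sopt = ?rate Wst Sst" by simp
  then show ?thesis
    using rank1 feas psd_Sopt opt_max
    by (simp add: Let_def p2_feasible_def Wopt_def[unfolded rank_one_part_def, symmetric] Sopt_def[symmetric])
qed

end
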